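(* For every $\delta>0$ there exists $N_0$ such that for all $N\ge N_0$, all $\mathscr P\subseteq\{1,\dots,N-1\}$ and all $g\in C([0,1];\mathbb R)$, $$\gamma^{\mathbf 0}_{[-1,N+1]\setminus\mathscr P}\big(\|h_N-g\|_\infty<\delta\big)\le\exp\Big(-N\inf_h\mathscr E_N(h)\Big),$$ where the infimum is over all $h:\{-\frac1N,0,\frac1N,\dots,1,1+\frac1N\}\to\mathbb R$ with $\max_{0\le j\le N}|h(j/N)-g(j/N)|\le2\delta$.
   Context: $\mathcal H_{[-1,N+1]}(\phi)=\sum_{k=0}^{N}\frac12(\phi_{k+1}+\phi_{k-1}-2\phi_k)^2$. $\gamma^{\mathbf 0}_{[-1,N+1]\setminus\mathscr P}$ is the centred Gaussian probability measure on $\phi:\{-1,\dots,N+1\}\to\mathbb R$ proportional to $e^{-\mathcal H_{[-1,N+1]}(\phi)}\prod_{k\in\{1,\dots,N-1\}\setminus\mathscr P}d\phi_k\prod_{k\in\mathscr P\cup\{-1,0,N,N+1\}}\delta_0(d\phi_k)$. $h_N$ is the linear interpolation on $[0,1]$ of $h_N(k/N)=\phi_k/N^2$; $\|\cdot\|_\infty$ is the sup norm on $[0,1]$. $\mathscr E_N(h)=\frac12\sum_{j=0}^N\frac1N N^4\big(h(\frac{j+1}N)+h(\frac{j-1}N)-2h(\frac jN)\big)^2$, so that $\mathcal H_{[-1,N+1]}(\phi)=N\mathscr E_N(h_N)$. *)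

theory Defs
  imports "HOL-Analysis.Analysis"
begin

text \<open>Configurations are functions phi :: int => real; only indices -1..N+1 matter.\<close>

definition hamiltonian :: "nat \<Rightarrow> (int \<Rightarrow> real) \<Rightarrow> real" where
  "hamiltonian N phi =
     (\<Sum>k\<in>{0..int N}. (1/2) * (phi (k+1) + phi (k-1) - 2 * phi k)^2)"

definition free_sites :: "nat \<Rightarrow> int set \<Rightarrow> int set" where
  "free_sites N P = {1..int N - 1} - P"

definition extend_zero :: "nat \<Rightarrow> int set \<Rightarrow> (int \<Rightarrow> real) \<Rightarrow> (int \<Rightarrow> real)" where
  "extend_zero N P x = (\<lambda>k. if k \<in> free_sites N P then x k else 0)"

text \<open>Probability of an event A under the pinned centred Gaussian measure
  gamma^0_{[-1,N+1]\P}: density exp(-H) w.r.t. Lebesgue measure on the free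
  coordinates, Dirac at 0 on the others, normalised.\<close>
definition gamma_prob :: "nat \<Rightarrow> int set \<Rightarrow> ((int \<Rightarrow> real) \<Rightarrow> bool) \<Rightarrow> ennreal" where
  "gamma_prob N P A =
     (\<integral>\<^sup>+ x. indicator {x. A (extend_zero N P x)} x
               * ennreal (exp (- hamiltonian N (extend_zero N P x)))
        \<partial>(PiM (free_sites N P) (\<lambda>_. lborel)))
   / (\<integral>\<^sup>+ x. ennreal (exp (- hamiltonian N (extend_zero N P x)))
        \<partial>(PiM (free_sites N P) (\<lambda>_. lborel)))"

definition lin_interp :: "nat \<Rightarrow> (int \<Rightarrow> real) \<Rightarrow> real \<Rightarrow> real" where
  "lin_interp N v t =
     (let k = min \<lfloor>real N * t\<rfloor> (int N - 1); l = real N * t - real_of_int k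
      in (1 - l) * v k + l * v (k + 1))"

definition hN :: "nat \<Rightarrow> (int \<Rightarrow> real) \<Rightarrow> real \<Rightarrow> real" where
  "hN N phi = lin_interp N (\<lambda>k. phi k / (real N)^2)"

definition sup_norm01 :: "(real \<Rightarrow> real) \<Rightarrow> real" where
  "sup_norm01 f = (SUP t\<in>{0..1}. \<bar>f t\<bar>)"

text \<open>Discrete energy E_N(h), with h represented by j \<mapsto> h(j/N), j = -1..N+1.\<close>
definition energy_N :: "nat \<Rightarrow> (int \<Rightarrow> real) \<Rightarrow> real" where
  "energy_N N h =
     (1/2) * (\<Sum>j\<in>{0..int N}. (1 / real N) * (real N)^4 * (h (j+1) + h (j-1) - 2 * h j)^2)"

end

theory Submission
  imports Defs
begin

text \<open>Let \<open>S\<close> be the set of configurations, vanishing at the pinned sites, whose rescaled grid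
  values stay within \<open>\<delta>\<close> of \<open>g\<close>; it is compact and convex and contains every configuration of
  the event. As \<open>H\<close> is a quadratic form, the first-order condition at its minimiser \<open>c\<close> on \<open>S\<close>
  gives \<open>H \<phi> \<ge> H c + H (\<phi> - c)\<close> for \<open>\<phi> \<in> S\<close>. Integrating \<open>exp (-H)\<close> over the event and
  translating by \<open>c\<close> bounds its unnormalised mass by \<open>exp (-H c)\<close> times the partition function.
  Finally \<open>c / N\<^sup>2\<close> is admissible in the infimum, and \<open>H c = N E\<^sub>N (c / N\<^sup>2)\<close>.\<close>

definition second_diff :: "(int \<Rightarrow> real) \<Rightarrow> int \<Rightarrow> real" where
  "second_diff u k = u (k + 1) + u (k - 1) - 2 * u k"

lemma hamiltonian_second_diff: "hamiltonian N u = (\<Sum>k\<in>{0..int N}. (1/2) * (second_diff u k)^2)"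
  by (simp add: hamiltonian_def second_diff_def)

lemma second_diff_add: "second_diff (\<lambda>k. u k + v k) k = second_diff u k + second_diff v k"
  by (simp add: second_diff_def algebra_simps)

lemma second_diff_scale: "second_diff (\<lambda>k. t * u k) k = t * second_diff u k"
  by (simp add: second_diff_def algebra_simps)

lemma hamiltonian_add:
  "hamiltonian N (\<lambda>k. u k + v k) =
     hamiltonian N u + hamiltonian N v + (\<Sum>k\<in>{0..int N}. second_diff u k * second_diff v k)"
  unfolding hamiltonian_second_diff second_diff_add
  by (simp add: power2_eq_square algebra_simps sum.distrib sum_distrib_left)

lemma hamiltonian_scale: "hamiltonian N (\<lambda>k. t * u k) = t^2 * hamiltonian N u"
  unfolding hamiltonian_second_diff second_diff_scale
  by (simp add: power_mult_distrib sum_distrib_left algebra_simps)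

lemma continuous_on_hamiltonian: "continuous_on S (hamiltonian N)"
  unfolding hamiltonian_def
  by (intro continuous_intros continuous_on_subset[OF continuous_on_product_coordinates]) auto

lemma nonneg_if_affine_nonneg_near_zero:
  fixes a b :: real
  assumes "\<And>t. 0 < t \<Longrightarrow> t \<le> 1 \<Longrightarrow> 0 \<le> t * a + b"
  shows "0 \<le> b"
proof (rule tendsto_lowerbound)
  show "((\<lambda>t. t * a + b) \<longlongrightarrow> b) (at_right 0)"
    by (auto intro!: tendsto_eq_intros)
  show "\<forall>\<^sub>F t in at_right 0. 0 \<le> t * a + b"
    by (rule eventually_mono[OF eventually_at_right_real[OF zero_less_one]]) (auto intro: assms)
qed simp

lemma hamiltonian_ge_minimizer_plus_diff:
  assumes segment: "\<And>t. 0 < t \<Longrightarrow> t \<le> 1 \<Longrightarrow> (\<lambda>k. c k + t * (phi k - c k)) \<in> S"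
    and min: "\<And>psi. psi \<in> S \<Longrightarrow> hamiltonian N c \<le> hamiltonian N psi"
  shows "hamiltonian N c + hamiltonian N (\<lambda>k. phi k - c k) \<le> hamiltonian N phi"
proof -
  define b where "b = (\<Sum>k\<in>{0..int N}. second_diff c k * second_diff (\<lambda>k. phi k - c k) k)"
  define h where "h = hamiltonian N (\<lambda>k. phi k - c k)"
  have "0 \<le> t * h + b" if t: "0 < t" "t \<le> 1" for t
  proof -
    have "hamiltonian N c \<le> hamiltonian N (\<lambda>k. c k + t * (phi k - c k))"
      using min segment t by blast
    also have "\<dots> = hamiltonian N c + t^2 * h + t * b"
      unfolding hamiltonian_add hamiltonian_scale h_def b_def second_diff_scale
      by (simp add: sum_distrib_left algebra_simps)
    finally have "0 \<le> t * (t * h + b)"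
      by (simp add: power2_eq_square algebra_simps)
    with t show ?thesis by (simp add: zero_le_mult_iff)
  qed
  then have "0 \<le> b" by (rule nonneg_if_affine_nonneg_near_zero)
  have "hamiltonian N phi = hamiltonian N (\<lambda>k. c k + (phi k - c k))" by simp
  also have "\<dots> = hamiltonian N c + h + b"
    unfolding hamiltonian_add h_def b_def ..
  finally show ?thesis using \<open>0 \<le> b\<close> h_def by simp
qed

interpretation lborel_product: product_sigma_finite "\<lambda>_::int. lborel"
  by standard

lemma distr_PiM_lborel_translate:
  fixes F :: "int set" and c :: "int \<Rightarrow> real"
  assumes fin: "finite F"
  shows "distr (PiM F (\<lambda>_. lborel)) (PiM F (\<lambda>_. lborel)) (\<lambda>x. \<lambda>i\<in>F. x i - c i)
         = PiM F (\<lambda>_. lborel)"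
proof (rule lborel_product.PiM_eqI[OF fin])
  fix A :: "int \<Rightarrow> real set" assume A: "\<And>i. i \<in> F \<Longrightarrow> A i \<in> sets lborel"
  have translate: "emeasure lborel ((+) (- c i) -` A i) = emeasure lborel (A i)" if "i \<in> F" for i
    using A[OF that] by (subst lborel_distr_plus[symmetric, of "- c i"]) (simp add: emeasure_distr)
  have "(\<lambda>x. \<lambda>i\<in>F. x i - c i) -` PiE F A \<inter> space (PiM F (\<lambda>_. lborel))
      = PiE F (\<lambda>i. (+) (- c i) -` A i)"
    by (auto simp: space_PiM PiE_iff)
  moreover have "PiE F A \<in> sets (PiM F (\<lambda>_. lborel))"
    using A by (intro sets_PiM_I_finite fin) auto
  moreover have "(+) (- c i) -` A i \<in> sets lborel" if "i \<in> F" for i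
    using measurable_sets[of "(+) (- c i)" borel borel "A i"] A[OF that] by simp
  ultimately show "emeasure (distr (PiM F (\<lambda>_. lborel)) (PiM F (\<lambda>_. lborel)) (\<lambda>x. \<lambda>i\<in>F. x i - c i)) (PiE F A)
      = (\<Prod>i\<in>F. emeasure lborel (A i))"
    using translate by (simp add: emeasure_distr lborel_product.emeasure_PiM fin)
qed simp

lemma nn_integral_PiM_lborel_translate:
  fixes F :: "int set" and c :: "int \<Rightarrow> real"
  assumes fin: "finite F" and f: "f \<in> borel_measurable (PiM F (\<lambda>_. lborel))"
  shows "(\<integral>\<^sup>+x. f (\<lambda>i\<in>F. x i - c i) \<partial>PiM F (\<lambda>_. lborel)) = (\<integral>\<^sup>+x. f x \<partial>PiM F (\<lambda>_. lborel))"
proof -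
  have "(\<lambda>x. \<lambda>i\<in>F. x i - c i) \<in> measurable (PiM F (\<lambda>_. lborel)) (PiM F (\<lambda>_. lborel))"
    by measurable
  with f show ?thesis
    by (subst (2) distr_PiM_lborel_translate[OF fin, symmetric]) (simp add: nn_integral_distr)
qed

lemma measurable_extend_zero [measurable]:
  "(\<lambda>x. extend_zero N P x k) \<in> borel_measurable (PiM (free_sites N P) (\<lambda>_. lborel))"
  by (cases "k \<in> free_sites N P") (simp_all add: extend_zero_def)

lemma measurable_hamiltonian_extend_zero [measurable]:
  "(\<lambda>x. hamiltonian N (extend_zero N P x)) \<in> borel_measurable (PiM (free_sites N P) (\<lambda>_. lborel))"
  unfolding hamiltonian_def by measurable

lemma ennreal_divide_le_if_le_mult:
  fixes a b k :: ennreal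
  assumes "a \<le> k * b"
  shows "a / b \<le> k"
  using assms divide_le_posI_ennreal[of b a k]
  by (cases "b = 0") (auto simp: mult.commute zero_less_iff_neq_zero)

lemma gamma_prob_le_exp_minimizer:
  assumes event: "\<And>x. A (extend_zero N P x) \<Longrightarrow> extend_zero N P x \<in> S"
    and segment: "\<And>phi t. phi \<in> S \<Longrightarrow> 0 < t \<Longrightarrow> t \<le> 1 \<Longrightarrow> (\<lambda>k. c k + t * (phi k - c k)) \<in> S"
    and min: "\<And>psi. psi \<in> S \<Longrightarrow> hamiltonian N c \<le> hamiltonian N psi"
    and pinned: "\<And>k. k \<notin> free_sites N P \<Longrightarrow> c k = 0"
  shows "gamma_prob N P A \<le> ennreal (exp (- hamiltonian N c))"
proof -
  define F where "F = free_sites N P"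
  define M where "M = PiM F (\<lambda>_. lborel::real measure)"
  define ext where "ext = extend_zero N P"
  define shift where "shift x = (\<lambda>i\<in>F. x i - c i)" for x :: "int \<Rightarrow> real"
  define w where "w x = ennreal (exp (- hamiltonian N (ext x)))" for x
  have finF: "finite F" by (simp add: F_def free_sites_def)
  have w_meas: "w \<in> borel_measurable M"
    unfolding w_def ext_def M_def F_def by measurable
  have ext_shift: "(\<lambda>k. ext x k - c k) = ext (shift x)" for x
    using pinned by (auto simp: ext_def extend_zero_def shift_def F_def)
  have "indicator {x. A (ext x)} x * w x \<le> ennreal (exp (- hamiltonian N c)) * w (shift x)" for x
  proof (cases "A (ext x)")
    case True
    then have "hamiltonian N c + hamiltonian N (ext (shift x)) \<le> hamiltonian N (ext x)"
      using hamiltonian_ge_minimizer_plus_diff[OF segment min] event ext_shift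
      by (metis ext_def)
    then show ?thesis
      using True by (simp add: w_def ennreal_mult[symmetric] exp_add[symmetric] ennreal_leI)
  qed simp
  then have "(\<integral>\<^sup>+ x. indicator {x. A (ext x)} x * w x \<partial>M)
      \<le> (\<integral>\<^sup>+ x. ennreal (exp (- hamiltonian N c)) * w (shift x) \<partial>M)"
    by (intro nn_integral_mono)
  also have "\<dots> = ennreal (exp (- hamiltonian N c)) * (\<integral>\<^sup>+ x. w (shift x) \<partial>M)"
  proof (rule nn_integral_cmult)
    have "shift \<in> measurable M M" unfolding shift_def M_def by measurable
    with w_meas show "(\<lambda>x. w (shift x)) \<in> borel_measurable M" by measurable
  qed
  also have "(\<integral>\<^sup>+ x. w (shift x) \<partial>M) = (\<integral>\<^sup>+ x. w x \<partial>M)"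
    using nn_integral_PiM_lborel_translate[OF finF w_meas[unfolded M_def]]
    by (simp add: shift_def M_def)
  finally have "(\<integral>\<^sup>+ x. indicator {x. A (ext x)} x * w x \<partial>M) / (\<integral>\<^sup>+ x. w x \<partial>M)
      \<le> ennreal (exp (- hamiltonian N c))"
    by (rule ennreal_divide_le_if_le_mult)
  then show ?thesis
    by (simp add: gamma_prob_def w_def ext_def M_def F_def)
qed

lemma lin_interp_grid:
  assumes N: "N \<ge> 1" and j: "j \<in> {0..int N}"
  shows "lin_interp N v (real_of_int j / real N) = v j"
proof -
  have e: "real N * (real_of_int j / real N) = real_of_int j" using N by simp
  show ?thesis
  proof (cases "j = int N")
    case True
    then show ?thesis using N unfolding lin_interp_def e Let_def by (simp add: min_def)
  next
    case False
    then have "min j (int N - 1) = j" using j by auto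
    then show ?thesis unfolding lin_interp_def e Let_def by simp
  qed
qed

lemma abs_lin_interp_le_sum:
  assumes N: "N \<ge> 1" and t: "t \<in> {0..1}"
  shows "\<bar>lin_interp N v t\<bar> \<le> 2 * (\<Sum>i\<in>{0..int N}. \<bar>v i\<bar>)"
proof -
  define x where "x = real N * t"
  define k where "k = min \<lfloor>x\<rfloor> (int N - 1)"
  define l where "l = x - real_of_int k"
  have x: "0 \<le> x" "x \<le> real N" using t N by (auto simp: x_def mult_le_cancel_left1)
  have k: "0 \<le> k" "k \<le> int N - 1" using x N by (auto simp: k_def)
  have l: "0 \<le> l \<and> l \<le> 1"
  proof (cases "\<lfloor>x\<rfloor> \<le> int N - 1")
    case True
    then have "k = \<lfloor>x\<rfloor>" by (simp add: k_def)
    then show ?thesis unfolding l_def by linarith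
  next
    case False
    then have "k = int N - 1" by (simp add: k_def)
    moreover have "x \<ge> real N" using False by linarith
    ultimately show ?thesis unfolding l_def using x by auto
  qed
  have "lin_interp N v t = (1 - l) * v k + l * v (k + 1)"
    unfolding lin_interp_def Let_def k_def l_def x_def by simp
  also have "\<bar>\<dots>\<bar> \<le> (1 - l) * \<bar>v k\<bar> + l * \<bar>v (k+1)\<bar>"
    using l abs_triangle_ineq[of "(1 - l) * v k" "l * v (k+1)"] by (simp add: abs_mult)
  also have "\<dots> \<le> \<bar>v k\<bar> + \<bar>v (k+1)\<bar>"
    using l mult_left_le_one_le[of "\<bar>v k\<bar>" "1 - l"] mult_left_le_one_le[of "\<bar>v (k+1)\<bar>" l] by simp
  also have "\<dots> \<le> 2 * (\<Sum>i\<in>{0..int N}. \<bar>v i\<bar>)"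
  proof -
    have "\<bar>v k\<bar> \<le> (\<Sum>i\<in>{0..int N}. \<bar>v i\<bar>)" using k by (intro member_le_sum) auto
    moreover have "\<bar>v (k+1)\<bar> \<le> (\<Sum>i\<in>{0..int N}. \<bar>v i\<bar>)" using k by (intro member_le_sum) auto
    ultimately show ?thesis by simp
  qed
  finally show ?thesis .
qed

lemma grid_close_if_sup_norm01_less:
  assumes N: "N \<ge> 1" and g: "continuous_on {0..1} g"
    and close: "sup_norm01 (\<lambda>t. hN N phi t - g t) < \<delta>" and j: "j \<in> {0..int N}"
  shows "\<bar>phi j / (real N)^2 - g (real_of_int j / real N)\<bar> < \<delta>"
proof -
  have "compact (g ` {0..1})" by (rule compact_continuous_image[OF g]) simp
  then obtain B where B: "\<And>t. t \<in> {0..1} \<Longrightarrow> \<bar>g t\<bar> \<le> B"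
    by (metis compact_imp_bounded bounded_real image_eqI)
  define V where "V = 2 * (\<Sum>i\<in>{0..int N}. \<bar>phi i / (real N)^2\<bar>)"
  \<comment> \<open>continuity of \<open>g\<close> only serves to make the supremum in \<open>sup_norm01\<close> a genuine one\<close>
  have bdd: "bdd_above ((\<lambda>t. \<bar>hN N phi t - g t\<bar>) ` {0..1})"
  proof (rule bdd_aboveI2)
    fix t :: real assume t: "t \<in> {0..1}"
    have "\<bar>hN N phi t\<bar> \<le> V" unfolding hN_def V_def by (rule abs_lin_interp_le_sum[OF N t])
    then show "\<bar>hN N phi t - g t\<bar> \<le> V + B" using B[OF t] by linarith
  qed
  have jt: "real_of_int j / real N \<in> {0..1}" using j N by auto
  have "\<bar>hN N phi (real_of_int j / real N) - g (real_of_int j / real N)\<bar> \<le> sup_norm01 (\<lambda>t. hN N phi t - g t)"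
    unfolding sup_norm01_def by (rule cSUP_upper[OF jt bdd])
  moreover have "hN N phi (real_of_int j / real N) = phi j / (real N)^2"
    unfolding hN_def by (rule lin_interp_grid[OF N j])
  ultimately show ?thesis using close by simp
qed

definition grid_tube :: "nat \<Rightarrow> int set \<Rightarrow> (real \<Rightarrow> real) \<Rightarrow> real \<Rightarrow> (int \<Rightarrow> real) set" where
  "grid_tube N P g \<delta> = {phi. (\<forall>k. k \<notin> free_sites N P \<longrightarrow> phi k = 0) \<and>
     (\<forall>j\<in>{0..int N}. \<bar>phi j / (real N)^2 - g (real_of_int j / real N)\<bar> \<le> \<delta>)}"

lemma compact_PiE_UNIV:
  assumes "\<And>k. compact (B k)"
  shows "compact (PiE UNIV B)"
proof -
  have "compactin (product_topology (\<lambda>_. euclidean) UNIV) (PiE UNIV B)"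
    using assms by (simp add: compactin_PiE)
  then show ?thesis by (simp add: euclidean_product_topology)
qed

lemma compact_grid_tube: "compact (grid_tube N P g \<delta>)"
proof -
  define B where "B k = {x. (k \<notin> free_sites N P \<longrightarrow> x = 0) \<and>
     (k \<in> {0..int N} \<longrightarrow> \<bar>x / (real N)^2 - g (real_of_int k / real N)\<bar> \<le> \<delta>)}" for k
  have "compact (B k)" for k
  proof (cases "k \<in> free_sites N P")
    case True
    then have "k \<in> {0..int N}" "N > 0" by (auto simp: free_sites_def)
    with True have "B k = {(real N)^2 * (g (real_of_int k / real N) - \<delta>) ..
                           (real N)^2 * (g (real_of_int k / real N) + \<delta>)}"
      by (auto simp: B_def abs_le_iff field_simps)
    then show ?thesis by simp
  next
    case False
    then have "B k \<subseteq> {0}" by (auto simp: B_def)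
    then show ?thesis by (metis finite.emptyI finite_insert finite_imp_compact finite_subset)
  qed
  moreover have "grid_tube N P g \<delta> = PiE UNIV B"
    by (auto simp: grid_tube_def B_def PiE_iff)
  ultimately show ?thesis by (simp add: compact_PiE_UNIV)
qed

lemma grid_tube_segment:
  assumes "c \<in> grid_tube N P g \<delta>" "phi \<in> grid_tube N P g \<delta>" "0 \<le> t" "t \<le> 1"
  shows "(\<lambda>k. c k + t * (phi k - c k)) \<in> grid_tube N P g \<delta>"
proof -
  have "\<bar>(x + t * (y - x)) / n - a\<bar> \<le> \<delta>"
    if "\<bar>x / n - a\<bar> \<le> \<delta>" "\<bar>y / n - a\<bar> \<le> \<delta>" for x y n a :: real
  proof -
    have "(x + t * (y - x)) / n - a = (1 - t) * (x / n - a) + t * (y / n - a)"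
      by (simp add: add_divide_distrib diff_divide_distrib algebra_simps)
    also have "\<bar>\<dots>\<bar> \<le> (1 - t) * \<delta> + t * \<delta>"
      using that assms(3,4) abs_triangle_ineq[of "(1 - t) * (x / n - a)" "t * (y / n - a)"]
        mult_left_mono[OF that(1), of "1 - t"] mult_left_mono[OF that(2), of t]
      by (simp add: abs_mult)
    finally show ?thesis by (simp add: algebra_simps)
  qed
  with assms(1,2) show ?thesis by (simp add: grid_tube_def)
qed

lemma energy_N_nonneg: "0 \<le> energy_N N h"
  unfolding energy_N_def by (intro mult_nonneg_nonneg sum_nonneg) auto

lemma real_mult_energy_N_rescale:
  assumes "N \<ge> 1"
  shows "real N * energy_N N (\<lambda>j. phi j / (real N)^2) = hamiltonian N phi"
proof -
  have termwise: "(1 / real N) * real N ^ 4 *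
        (phi (j+1) / (real N)^2 + phi (j-1) / (real N)^2 - 2 * (phi j / (real N)^2))^2
      = (1 / real N) * (phi (j+1) + phi (j-1) - 2 * phi j)^2" for j
  proof -
    have "phi (j+1) / (real N)^2 + phi (j-1) / (real N)^2 - 2 * (phi j / (real N)^2)
        = (phi (j+1) + phi (j-1) - 2 * phi j) / (real N)^2"
      by (simp add: add_divide_distrib diff_divide_distrib)
    then show ?thesis using assms by (simp add: power_divide flip: power_mult)
  qed
  have "energy_N N (\<lambda>j. phi j / (real N)^2)
      = (1/2) * (\<Sum>j\<in>{0..int N}. (1 / real N) * (phi (j+1) + phi (j-1) - 2 * phi j)^2)"
    unfolding energy_N_def by (simp only: termwise)
  also have "\<dots> = (1 / real N) * hamiltonian N phi"
    by (simp add: hamiltonian_def sum_distrib_left mult.commute mult.left_commute)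
  finally show ?thesis using assms by simp
qed

theorem lemma3p12:
  fixes \<delta> :: real
  assumes "\<delta> > 0"
  shows "\<exists>N0::nat. \<forall>N\<ge>N0. \<forall>P::int set. \<forall>g::real \<Rightarrow> real.
           P \<subseteq> {1..int N - 1} \<longrightarrow> continuous_on {0..1} g \<longrightarrow>
           gamma_prob N P (\<lambda>phi. sup_norm01 (\<lambda>t. hN N phi t - g t) < \<delta>)
             \<le> ennreal (exp (- real N *
                  (INF h\<in>{h::int \<Rightarrow> real. \<forall>j\<in>{0..int N}.
                            \<bar>h j - g (real_of_int j / real N)\<bar> \<le> 2 * \<delta>}.
                     energy_N N h)))"
proof (intro exI[of _ 1] allI impI)
  fix N :: nat and P :: "int set" and g :: "real \<Rightarrow> real"
  assume N: "1 \<le> N" and g: "continuous_on {0..1} g"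
  define S where "S = grid_tube N P g \<delta>"
  define ev where "ev phi \<longleftrightarrow> sup_norm01 (\<lambda>t. hN N phi t - g t) < \<delta>" for phi
  define T where "T = {h. \<forall>j\<in>{0..int N}. \<bar>h j - g (real_of_int j / real N)\<bar> \<le> 2 * \<delta>}"
  have event: "extend_zero N P x \<in> S" if "ev (extend_zero N P x)" for x
    using grid_close_if_sup_norm01_less[OF N g that[unfolded ev_def]]
    by (auto simp: S_def grid_tube_def extend_zero_def less_imp_le)
  show "gamma_prob N P ev \<le> ennreal (exp (- real N * (INF h\<in>T. energy_N N h)))"
  proof (cases "S = {}")
    case True
    with event have "{x. ev (extend_zero N P x)} = {}" by blast
    then show ?thesis by (simp add: gamma_prob_def)
  next
    case False
    then obtain c where c: "c \<in> S" and min: "\<And>psi. psi \<in> S \<Longrightarrow> hamiltonian N c \<le> hamiltonian N psi"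
      using continuous_attains_inf[OF compact_grid_tube False[unfolded S_def] continuous_on_hamiltonian]
      unfolding S_def by blast
    have pinned: "c k = 0" if "k \<notin> free_sites N P" for k
      using c that by (simp add: S_def grid_tube_def)
    have "gamma_prob N P ev \<le> ennreal (exp (- hamiltonian N c))"
      using c by (intro gamma_prob_le_exp_minimizer[OF event _ min pinned])
        (auto simp: S_def intro: grid_tube_segment)
    also have "\<dots> \<le> ennreal (exp (- real N * (INF h\<in>T. energy_N N h)))"
    proof -
      have "(\<lambda>j. c j / (real N)^2) \<in> T"
        using c \<open>\<delta> > 0\<close> by (force simp: S_def T_def grid_tube_def)
      then have "(INF h\<in>T. energy_N N h) \<le> energy_N N (\<lambda>j. c j / (real N)^2)"
        by (intro cINF_lower bdd_belowI2[of _ 0] energy_N_nonneg)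
      then have "real N * (INF h\<in>T. energy_N N h) \<le> hamiltonian N c"
        using real_mult_energy_N_rescale[OF N, of c] by (metis mult_left_mono of_nat_0_le_iff)
      then show ?thesis by (intro ennreal_leI) simp
    qed
    finally show ?thesis .
  qed
qed

end
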